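(* Let $q\ge 2$ be an integer and let $\log$ denote the base-$q$ logarithm. For every $\theta\in[0,1]$ let $F(\theta)$ be the maximum of the joint entropy $H(X_1,X_2)$ (computed with base-$q$ logarithms) over all pairs of independent random variables $X_1,X_2$ taking values in $[q]=\{1,\dots,q\}$ such that $\Pr[X_1=X_2]=\theta$. Then the function $F\colon[0,1]\to\mathbb{R}$ is continuous, increasing on $[0,1/q]$ and decreasing on $[1/q,1]$. Moreover, for $\theta\in[1/q,1]$, \[ F(\theta)=2\bigl(-\alpha\log\alpha-(1-\alpha)\log(1-\alpha)+(1-\alpha)\log(q-1)\bigr), \] where $\alpha=\alpha(\theta):=\frac1q+\sqrt{\left(1-\frac1q\right)\left(\theta-\frac1q\right)}$, which defines a bijection $\alpha\colon[1/q,1]\to[1/q,1]$.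
   Context: The entropy of a random variable $Z$ with distribution $(z_1,\dots,z_k)$ is $H(Z)=-\sum z_i\log z_i$ with base-$q$ logarithm (and $0\log 0=0$); $H(X_1,X_2)$ denotes the entropy of the pair $(X_1,X_2)$. *)

theory Defs
  imports "HOL-Analysis.Analysis"
begin

definition distr :: "nat \<Rightarrow> (nat \<Rightarrow> real) \<Rightarrow> bool" where
  "distr q p \<longleftrightarrow> (\<forall>i\<in>{1..q}. 0 \<le> p i) \<and> (\<Sum>i=1..q. p i) = 1"

definition xlogx :: "nat \<Rightarrow> real \<Rightarrow> real" where
  "xlogx q z = (if z = 0 then 0 else z * log (real q) z)"

definition joint_entropy :: "nat \<Rightarrow> (nat \<Rightarrow> real) \<Rightarrow> (nat \<Rightarrow> real) \<Rightarrow> real" where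
  "joint_entropy q p r = - (\<Sum>i=1..q. \<Sum>j=1..q. xlogx q (p i * r j))"

definition coll_prob :: "nat \<Rightarrow> (nat \<Rightarrow> real) \<Rightarrow> (nat \<Rightarrow> real) \<Rightarrow> real" where
  "coll_prob q p r = (\<Sum>i=1..q. p i * r i)"

definition ent_set :: "nat \<Rightarrow> real \<Rightarrow> real set" where
  "ent_set q \<theta> = {joint_entropy q p r | p r. distr q p \<and> distr q r \<and> coll_prob q p r = \<theta>}"

text \<open>F(theta): the maximum (supremum; attainment is part of the theorem).\<close>
definition F :: "nat \<Rightarrow> real \<Rightarrow> real" where
  "F q \<theta> = Sup (ent_set q \<theta>)"

definition alpha :: "nat \<Rightarrow> real \<Rightarrow> real" where
  "alpha q \<theta> = 1 / real q + sqrt ((1 - 1 / real q) * (\<theta> - 1 / real q))"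

end

theory Submission
  imports Defs "HOL-Real_Asymp.Real_Asymp"
begin

(* Independence gives H(X1, X2) = H(p) + H(r). For theta >= 1/q, concavity of entropy bounds
   H(p) + H(r) by 2 H(m) for the midpoint m = (p + r) / 2, whose collision probability
   sum_i m_i^2 is at least theta. Among distributions with sum_i m_i^2 = c >= 1/q the entropy is
   maximal for the distribution (a, b, ..., b) with a = alpha q c; this comes from a convexity
   property of the Bregman divergence of x ln x. As the q-ary entropy of a decreases for
   a >= 1/q, this gives the formula for F, attained by two copies of (a, b, ..., b), and its
   monotonicity on [1/q, 1].
   For theta <= 1/q, mixing an optimal pair with the uniform distribution raises the collision
   probability towards 1/q without lowering the entropies, so F increases. Maxima exist by
   compactness, which also makes F upper semicontinuous; pushing an optimal pair towards point
   masses lowers the collision probability at a small cost in entropy, and together with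
   monotonicity this gives continuity on [0, 1/q]. *)

section \<open>The function x ln x\<close>

lemma continuous_on_xlnx: "continuous_on {0..} (\<lambda>z::real. z * ln z)"
proof -
  have "continuous (at x within {0..}) (\<lambda>z::real. z * ln z)" if "x \<in> {0..}" for x
  proof (cases "x = 0")
    case True
    have "((\<lambda>x::real. x * ln x) \<longlongrightarrow> 0) (at_right 0)" by real_asymp
    then show ?thesis using True by (simp add: continuous_within at_within_Ici_at_right)
  next
    case False
    with that have "0 < x" by simp
    then have "isCont (\<lambda>z::real. z * ln z) x" by (auto intro!: continuous_intros)
    then show ?thesis by (rule continuous_at_imp_continuous_within)
  qed
  then show ?thesis by (simp add: continuous_on_eq_continuous_within)
qed

lemma xlnx_ge_tangent:
  fixes a m :: real
  assumes "0 \<le> a" "0 < m"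
  shows "m * ln m + (a - m) * (ln m + 1) \<le> a * ln a"
proof (cases "a = 0")
  case True then show ?thesis using assms by (simp add: algebra_simps)
next
  case False
  with assms have "a > 0" by simp
  have "a * ln (m / a) \<le> a * (m / a - 1)"
    using \<open>a > 0\<close> assms by (intro mult_left_mono ln_le_minus_one) auto
  with \<open>a > 0\<close> assms show ?thesis by (simp add: ln_div algebra_simps)
qed

lemma xlnx_convex:
  fixes a b t :: real
  assumes "0 \<le> a" "0 \<le> b" "0 \<le> t" "t \<le> 1"
  shows "((1 - t) * a + t * b) * ln ((1 - t) * a + t * b) \<le> (1 - t) * (a * ln a) + t * (b * ln b)"
proof -
  define m where "m = (1 - t) * a + t * b"
  have "m \<ge> 0" using assms by (simp add: m_def)
  show ?thesis
  proof (cases "m = 0")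
    case True
    moreover have "0 \<le> (1 - t) * a" "0 \<le> t * b"
      using assms by simp_all
    ultimately have "(1 - t) * a = 0" "t * b = 0"
      unfolding m_def by linarith+
    then have "(1 - t) * (a * ln a) = 0" "t * (b * ln b) = 0"
      by (simp_all only: mult.assoc[symmetric] mult_zero_left)
    moreover have "m * ln m = 0" using True by simp
    ultimately show ?thesis unfolding m_def by linarith
  next
    case False
    with \<open>m \<ge> 0\<close> have "m > 0" by simp
    have "(1 - t) * (m * ln m + (a - m) * (ln m + 1)) + t * (m * ln m + (b - m) * (ln m + 1))
        \<le> (1 - t) * (a * ln a) + t * (b * ln b)"
      using assms \<open>m > 0\<close> by (intro add_mono mult_left_mono xlnx_ge_tangent) auto
    moreover have "(1 - t) * (m * ln m + (a - m) * (ln m + 1)) + t * (m * ln m + (b - m) * (ln m + 1))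
        = m * ln m"
      by (simp add: m_def algebra_simps)
    ultimately show ?thesis by (simp add: m_def)
  qed
qed


text \<open>The function \<open>x ln x\<close> minus its tangent line at \<open>b\<close>.\<close>
definition bregman_xlnx :: "real \<Rightarrow> real \<Rightarrow> real" where
  "bregman_xlnx b x = x * ln x - x * ln b - x + b"

lemma bregman_xlnx_self [simp]: "bregman_xlnx b b = 0"
  by (simp add: bregman_xlnx_def)

lemma bregman_xlnx_minus_quadratic_antimono:
  assumes "0 < b" "0 \<le> x" "x \<le> y"
  shows "bregman_xlnx b y - (y - b)\<^sup>2 / (2 * b) \<le> bregman_xlnx b x - (x - b)\<^sup>2 / (2 * b)"
proof -
  let ?g = "\<lambda>z. z * ln z + (b - z * ln b - z - (z - b)\<^sup>2 / (2 * b))"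
  have xlnx: "continuous_on {x..y} (\<lambda>z. z * ln z)"
    using assms by (intro continuous_on_subset[OF continuous_on_xlnx]) auto
  have cont: "continuous_on {x..y} ?g"
    by (rule continuous_on_add[OF xlnx]) (use assms in \<open>auto intro!: continuous_intros\<close>)
  have deriv: "(?g has_real_derivative ln z - ln b - (z - b) / b) (at z)" if "0 < z" for z
    using that assms by (auto intro!: derivative_eq_intros simp: field_simps power2_eq_square)
  have nonpos: "ln z - ln b - (z - b) / b \<le> 0" if "0 < z" for z
    using ln_le_minus_one[of "z / b"] that assms by (simp add: ln_div diff_divide_distrib)
  have "?g y \<le> ?g x"
  proof (rule DERIV_nonpos_imp_decreasing_open[OF \<open>x \<le> y\<close> _ cont])
    fix z assume "x < z"
    with assms have "0 < z" by simp
    with deriv nonpos show "\<exists>D. (?g has_real_derivative D) (at z) \<and> D \<le> 0" by blast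
  qed
  then show ?thesis by (simp add: bregman_xlnx_def algebra_simps)
qed

lemma ln_diff_mult_le_bregman_xlnx:
  assumes "0 < b" "b \<le> x"
  shows "(x - b) * (ln x - ln b) \<le> 2 * bregman_xlnx b x"
proof -
  let ?N = "\<lambda>z. (z - b) * (ln z - ln b) - 2 * (z * ln z - z * ln b - z + b)"
  have deriv: "(?N has_real_derivative 1 - b / z - (ln z - ln b)) (at z)" if "0 < z" for z
    using that assms by (auto intro!: derivative_eq_intros simp: field_simps)
  have nonpos: "1 - b / z - (ln z - ln b) \<le> 0" if "0 < z" for z
    using ln_le_minus_one[of "b / z"] that assms by (simp add: ln_div)
  have "?N x \<le> ?N b"
  proof (rule DERIV_nonpos_imp_nonincreasing[OF \<open>b \<le> x\<close>])
    fix z assume "b \<le> z"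
    with assms have "0 < z" by simp
    with deriv nonpos show "\<exists>D. (?N has_real_derivative D) (at z) \<and> D \<le> 0" by blast
  qed
  then show ?thesis by (simp add: bregman_xlnx_def)
qed

lemma bregman_xlnx_ratio_antimono:
  assumes "0 < b" "b < x" "x \<le> y"
  shows "bregman_xlnx b y / (y - b)\<^sup>2 \<le> bregman_xlnx b x / (x - b)\<^sup>2"
proof -
  let ?R = "\<lambda>z. (z * ln z - z * ln b - z + b) / (z - b)\<^sup>2"
  let ?R' = "\<lambda>z. ((ln z - ln b) * (z - b)\<^sup>2 - bregman_xlnx b z * (2 * (z - b))) / ((z - b)\<^sup>2 * (z - b)\<^sup>2)"
  have deriv: "(?R has_real_derivative ?R' z) (at z)" if "b < z" for z
  proof -
    have "b * b + z * z \<noteq> b * (z * 2)"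
    proof
      assume "b * b + z * z = b * (z * 2)"
      then have "(z - b) * (z - b) = 0" by (simp add: algebra_simps)
      with that show False by simp
    qed
    with that assms show ?thesis
      by (auto intro!: derivative_eq_intros simp: bregman_xlnx_def field_simps power2_eq_square)
  qed
  have nonpos: "?R' z \<le> 0" if "b < z" for z
  proof -
    have "(ln z - ln b) * (z - b)\<^sup>2 - bregman_xlnx b z * (2 * (z - b))
        = (z - b) * ((z - b) * (ln z - ln b) - 2 * bregman_xlnx b z)"
      by (simp add: algebra_simps power2_eq_square)
    also have "\<dots> \<le> 0"
      using ln_diff_mult_le_bregman_xlnx[of b z] that assms by (intro mult_nonneg_nonpos) auto
    finally show ?thesis by (intro divide_nonpos_nonneg) auto
  qed
  have "?R y \<le> ?R x"
  proof (rule DERIV_nonpos_imp_nonincreasing[OF \<open>x \<le> y\<close>])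
    fix z assume "x \<le> z"
    with assms have "b < z" by simp
    with deriv nonpos show "\<exists>D. (?R has_real_derivative D) (at z) \<and> D \<le> 0" by blast
  qed
  then show ?thesis by (simp add: bregman_xlnx_def)
qed

text \<open>Equivalently, \<open>bregman_xlnx b x / (x - b)\<^sup>2\<close> is antitone in \<open>x \<ge> 0\<close>: left of \<open>b\<close> it
  stays above \<open>1 / (2 * b)\<close>, right of \<open>b\<close> below it.\<close>
lemma bregman_xlnx_scaled_le:
  assumes "0 < b" "b < a" "0 \<le> x" "x \<le> a"
  shows "(x - b)\<^sup>2 * bregman_xlnx b a \<le> (a - b)\<^sup>2 * bregman_xlnx b x"
proof (cases x b rule: linorder_cases)
  case less
  have x_side: "(x - b)\<^sup>2 / (2 * b) \<le> bregman_xlnx b x"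
    using bregman_xlnx_minus_quadratic_antimono[of b x b] assms less by simp
  have a_side: "bregman_xlnx b a \<le> (a - b)\<^sup>2 / (2 * b)"
    using bregman_xlnx_minus_quadratic_antimono[of b b a] assms by simp
  have "(x - b)\<^sup>2 * bregman_xlnx b a \<le> (x - b)\<^sup>2 * ((a - b)\<^sup>2 / (2 * b))"
    using a_side by (rule mult_left_mono) simp
  also have "\<dots> = (a - b)\<^sup>2 * ((x - b)\<^sup>2 / (2 * b))"
    by simp
  also have "\<dots> \<le> (a - b)\<^sup>2 * bregman_xlnx b x"
    using x_side by (rule mult_left_mono) simp
  finally show ?thesis .
next
  case greater
  then have "bregman_xlnx b a / (a - b)\<^sup>2 \<le> bregman_xlnx b x / (x - b)\<^sup>2"
    using bregman_xlnx_ratio_antimono assms by blast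
  then have "bregman_xlnx b a / (a - b)\<^sup>2 * ((a - b)\<^sup>2 * (x - b)\<^sup>2)
      \<le> bregman_xlnx b x / (x - b)\<^sup>2 * ((a - b)\<^sup>2 * (x - b)\<^sup>2)"
    by (rule mult_right_mono) simp
  with greater assms show ?thesis by (simp add: mult.commute)
qed simp

section \<open>Two continuity principles\<close>

lemma compact_fibres_upper_bound:
  fixes J g :: "'a::t2_space \<Rightarrow> real"
  assumes "compact K" "continuous_on K J" "continuous_on K g"
    and fibre: "\<And>x. x \<in> K \<Longrightarrow> g x = y \<Longrightarrow> J x < c"
  shows "\<exists>\<delta>>0. \<forall>x\<in>K. \<bar>g x - y\<bar> < \<delta> \<longrightarrow> J x < c"
proof -
  define S where "S = K \<inter> J -` {c..}"
  have "closed S"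
    unfolding S_def using assms(1,2)
    by (intro continuous_closed_preimage) (auto simp: compact_imp_closed)
  then have "compact S"
    using compact_Int_closed[OF assms(1), of S] by (simp add: S_def Int_left_absorb)
  show ?thesis
  proof (cases "S = {}")
    case True
    then have "\<forall>x\<in>K. J x < c" by (auto simp: S_def not_le)
    then show ?thesis by (intro exI[of _ "1::real"]) auto
  next
    case False
    have "continuous_on S (\<lambda>x. \<bar>g x - y\<bar>)"
      using assms(3) by (auto simp: S_def intro!: continuous_intros elim: continuous_on_subset)
    then obtain x0 where x0: "x0 \<in> S" "\<And>x. x \<in> S \<Longrightarrow> \<bar>g x0 - y\<bar> \<le> \<bar>g x - y\<bar>"
      using continuous_attains_inf[OF \<open>compact S\<close> False] by blast
    have "\<bar>g x0 - y\<bar> > 0"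
      using fibre[of x0] x0(1) by (auto simp: S_def)
    with x0 show ?thesis
      by (intro exI[of _ "\<bar>g x0 - y\<bar>"]) (force simp: S_def)
  qed
qed

lemma continuous_on_mono_usc_left_approx:
  fixes f :: "real \<Rightarrow> real"
  assumes f_mono: "mono_on {a..b} f"
    and f_usc: "\<And>x \<epsilon>. x \<in> {a..b} \<Longrightarrow> 0 < \<epsilon> \<Longrightarrow> \<exists>\<delta>>0. \<forall>y\<in>{a..b}. \<bar>y - x\<bar> < \<delta> \<longrightarrow> f y < f x + \<epsilon>"
    and f_left: "\<And>x \<epsilon>. x \<in> {a<..b} \<Longrightarrow> 0 < \<epsilon> \<Longrightarrow> \<exists>y\<in>{a..<x}. f x - \<epsilon> < f y"
  shows "continuous_on {a..b} f"
  unfolding continuous_on_iff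
proof (intro ballI allI impI)
  fix x \<epsilon> :: real
  assume x: "x \<in> {a..b}" and "0 < \<epsilon>"
  obtain \<delta>1 where "\<delta>1 > 0" and upper: "\<And>y. y \<in> {a..b} \<Longrightarrow> \<bar>y - x\<bar> < \<delta>1 \<Longrightarrow> f y < f x + \<epsilon>"
    using f_usc[OF x \<open>0 < \<epsilon>\<close>] by blast
  obtain \<delta>2 where "\<delta>2 > 0"
    and lower: "\<And>y. y \<in> {a..b} \<Longrightarrow> x - \<delta>2 < y \<Longrightarrow> y < x \<Longrightarrow> f x - \<epsilon> < f y"
  proof (cases "x = a")
    case True
    then show ?thesis using x by (intro that[of 1]) auto
  next
    case False
    then obtain y0 where y0: "y0 \<in> {a..<x}" "f x - \<epsilon> < f y0"
      using f_left[of x \<epsilon>] x \<open>0 < \<epsilon>\<close> by auto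
    have "f y0 \<le> f y" if "y \<in> {a..b}" "y0 < y" for y
      using f_mono y0(1) that x by (auto intro: mono_onD)
    with y0 show ?thesis by (intro that[of "x - y0"]) force+
  qed
  show "\<exists>\<delta>>0. \<forall>y\<in>{a..b}. dist y x < \<delta> \<longrightarrow> dist (f y) (f x) < \<epsilon>"
  proof (intro exI[of _ "min \<delta>1 \<delta>2"] conjI ballI impI)
    fix y assume y: "y \<in> {a..b}" "dist y x < min \<delta>1 \<delta>2"
    have "f x - \<epsilon> < f y"
    proof (cases "x \<le> y")
      case True
      then show ?thesis using f_mono x y(1) \<open>0 < \<epsilon>\<close> mono_onD[OF f_mono] by fastforce
    qed (use lower y in \<open>auto simp: dist_real_def\<close>)
    moreover have "f y < f x + \<epsilon>" using upper y by (simp add: dist_real_def)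
    ultimately show "dist (f y) (f x) < \<epsilon>" by (simp add: dist_real_def abs_less_iff)
  qed (use \<open>\<delta>1 > 0\<close> \<open>\<delta>2 > 0\<close> in simp)
qed

section \<open>Entropy and collision probability\<close>

definition entropy :: "nat \<Rightarrow> (nat \<Rightarrow> real) \<Rightarrow> real" where
  "entropy q p = - (\<Sum>i=1..q. xlogx q (p i))"

definition mixture :: "real \<Rightarrow> (nat \<Rightarrow> real) \<Rightarrow> (nat \<Rightarrow> real) \<Rightarrow> nat \<Rightarrow> real" where
  "mixture t p d i = (1 - t) * p i + t * d i"

definition point_mass :: "nat \<Rightarrow> nat \<Rightarrow> real" where
  "point_mass a i = (if i = a then 1 else 0)"

definition uniform :: "nat \<Rightarrow> nat \<Rightarrow> real" where
  "uniform q i = 1 / real q"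

lemma xlogx_eq_ln: "xlogx q z = z * ln z / ln (real q)"
  by (simp add: xlogx_def log_def)

lemma entropy_eq_ln: "entropy q p = - (\<Sum>i=1..q. p i * ln (p i)) / ln (real q)"
  by (simp add: entropy_def xlogx_eq_ln sum_divide_distrib)

lemma continuous_on_xlogx: "continuous_on {0..} (xlogx q)"
proof -
  have "continuous_on {0..} (\<lambda>z::real. z * ln z * (1 / ln (real q)))"
    by (intro continuous_on_mult continuous_on_xlnx continuous_on_const)
  then show ?thesis by (simp add: xlogx_eq_ln[abs_def])
qed

lemma xlogx_mult:
  assumes "0 \<le> x" "0 \<le> y"
  shows "xlogx q (x * y) = y * xlogx q x + x * xlogx q y"
proof (cases "x = 0 \<or> y = 0")
  case True
  then show ?thesis by (auto simp: xlogx_def)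
next
  case False
  with assms have "0 < x" "0 < y" by auto
  then show ?thesis by (simp add: xlogx_eq_ln ln_mult field_simps add_divide_distrib)
qed

lemma joint_entropy_eq_entropy_add:
  assumes "distr q p" "distr q r"
  shows "joint_entropy q p r = entropy q p + entropy q r"
proof -
  have "(\<Sum>i=1..q. \<Sum>j=1..q. xlogx q (p i * r j))
      = (\<Sum>i=1..q. \<Sum>j=1..q. r j * xlogx q (p i) + p i * xlogx q (r j))"
    using assms by (intro sum.cong refl xlogx_mult) (auto simp: distr_def)
  also have "\<dots> = (\<Sum>i=1..q. xlogx q (p i) * (\<Sum>j=1..q. r j) + p i * (\<Sum>j=1..q. xlogx q (r j)))"
    by (simp add: sum.distrib sum_distrib_left sum_distrib_right mult.commute)
  also have "\<dots> = (\<Sum>i=1..q. xlogx q (p i)) + (\<Sum>j=1..q. xlogx q (r j))"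
    using assms by (simp add: distr_def sum.distrib flip: sum_distrib_right)
  finally show ?thesis by (simp add: joint_entropy_def entropy_def)
qed

lemma entropy_cong: "(\<And>i. i \<in> {1..q} \<Longrightarrow> p i = p' i) \<Longrightarrow> entropy q p = entropy q p'"
  unfolding entropy_def by (metis (no_types, lifting) sum.cong)

lemma coll_prob_cong:
  "(\<And>i. i \<in> {1..q} \<Longrightarrow> p i = p' i) \<Longrightarrow> (\<And>i. i \<in> {1..q} \<Longrightarrow> r i = r' i)
    \<Longrightarrow> coll_prob q p r = coll_prob q p' r'"
  unfolding coll_prob_def by (metis (no_types, lifting) sum.cong)

lemma distr_le_1: "distr q p \<Longrightarrow> i \<in> {1..q} \<Longrightarrow> p i \<le> 1"
  unfolding distr_def using member_le_sum[of i "{1..q}" p] by auto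

lemma distr_sum_squares_le_1:
  assumes "distr q p"
  shows "(\<Sum>i=1..q. (p i)\<^sup>2) \<le> 1"
proof -
  have "(\<Sum>i=1..q. (p i)\<^sup>2) \<le> (\<Sum>i=1..q. p i)"
    using assms distr_le_1[OF assms]
    by (intro sum_mono) (auto simp: distr_def power2_eq_square mult_left_le)
  with assms show ?thesis by (simp add: distr_def)
qed

lemma distr_mixture:
  assumes "distr q p" "distr q d" "0 \<le> t" "t \<le> 1"
  shows "distr q (mixture t p d)"
proof -
  have "(\<Sum>i=1..q. mixture t p d i) = (1 - t) * (\<Sum>i=1..q. p i) + t * (\<Sum>i=1..q. d i)"
    by (simp add: mixture_def sum.distrib sum_distrib_left)
  with assms show ?thesis by (auto simp: distr_def mixture_def)
qed

lemma distr_point_mass: "a \<in> {1..q} \<Longrightarrow> distr q (point_mass a)"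
  by (simp add: distr_def point_mass_def)

lemma coll_prob_commute: "coll_prob q p r = coll_prob q r p"
  by (simp add: coll_prob_def mult.commute)

lemma coll_prob_nonneg: "distr q p \<Longrightarrow> distr q r \<Longrightarrow> 0 \<le> coll_prob q p r"
  by (auto simp: coll_prob_def distr_def intro: sum_nonneg)

lemma coll_prob_mixture_left:
  "coll_prob q (mixture t p d) r = (1 - t) * coll_prob q p r + t * coll_prob q d r"
  unfolding coll_prob_def mixture_def
  by (simp add: distrib_right mult.assoc sum.distrib flip: sum_distrib_left)

lemma coll_prob_point_mass_left:
  assumes "a \<in> {1..q}"
  shows "coll_prob q (point_mass a) r = r a"
proof -
  have "coll_prob q (point_mass a) r = (\<Sum>i=1..q. if i = a then r i else 0)"
    unfolding coll_prob_def by (intro sum.cong) (auto simp: point_mass_def)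
  with assms show ?thesis by simp
qed

lemma coll_prob_uniform_left: "distr q r \<Longrightarrow> coll_prob q (uniform q) r = 1 / real q"
  by (simp add: coll_prob_def uniform_def distr_def flip: sum_divide_distrib)

text \<open>If every mass of \<open>p\<close> and \<open>r\<close> is at least \<open>\<theta> = coll_prob q p r > 0\<close>, then
  \<open>\<Sum>i. p i * (r i - \<theta>) = 0\<close> has positive weights and nonnegative factors.\<close>
lemma coll_prob_le_masses_imp_const:
  assumes "distr q p" "distr q r" "0 < coll_prob q p r"
    and "\<And>i. i \<in> {1..q} \<Longrightarrow> coll_prob q p r \<le> p i \<and> coll_prob q p r \<le> r i"
  shows "\<And>i. i \<in> {1..q} \<Longrightarrow> r i = coll_prob q p r"
proof -
  define \<theta> where "\<theta> = coll_prob q p r"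
  have "(\<Sum>i=1..q. p i * (r i - \<theta>)) = coll_prob q p r - (\<Sum>i=1..q. p i) * \<theta>"
    by (simp add: coll_prob_def right_diff_distrib sum_subtractf flip: sum_distrib_right)
  then have "(\<Sum>i=1..q. p i * (r i - \<theta>)) = 0"
    using assms(1) by (simp add: distr_def \<theta>_def)
  moreover have "0 \<le> p i * (r i - \<theta>)" if "i \<in> {1..q}" for i
    using assms(3) assms(4)[OF that] unfolding \<theta>_def by (intro mult_nonneg_nonneg) linarith+
  ultimately have "\<forall>i\<in>{1..q}. p i * (r i - \<theta>) = 0"
    by (subst (asm) sum_nonneg_eq_0_iff) auto
  moreover have "\<forall>i\<in>{1..q}. 0 < p i"
    using assms(3,4) unfolding \<theta>_def by (meson less_le_trans)
  ultimately show "\<And>i. i \<in> {1..q} \<Longrightarrow> r i = coll_prob q p r"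
    by (fastforce simp: \<theta>_def)
qed

lemma entropy_add_in_ent_set:
  assumes "distr q p" "distr q r" "coll_prob q p r = \<theta>"
  shows "entropy q p + entropy q r \<in> ent_set q \<theta>"
proof -
  have "joint_entropy q p r \<in> ent_set q \<theta>"
    using assms by (auto simp: ent_set_def)
  then show ?thesis
    by (simp add: joint_entropy_eq_entropy_add[OF assms(1,2)])
qed

section \<open>Compactness\<close>

text \<open>Distributions normalised to vanish outside \<open>[q]\<close>; unlike all distributions, they form
  a compact set in the product topology.\<close>
definition distrs :: "nat \<Rightarrow> (nat \<Rightarrow> real) set" where
  "distrs q = {p. distr q p \<and> (\<forall>i. i \<notin> {1..q} \<longrightarrow> p i = 0)}"

lemma distr_if_distrs: "p \<in> distrs q \<Longrightarrow> distr q p"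
  by (simp add: distrs_def)

lemma exists_distrs_agree:
  assumes "distr q p"
  shows "\<exists>p'\<in>distrs q. \<forall>i\<in>{1..q}. p' i = p i"
proof
  let ?p' = "\<lambda>i. if i \<in> {1..q} then p i else 0"
  have "(\<Sum>i=1..q. ?p' i) = (\<Sum>i=1..q. p i)"
    by (intro sum.cong) auto
  with assms show "?p' \<in> distrs q"
    by (auto simp: distrs_def distr_def)
qed simp

lemma point_mass_in_distrs: "a \<in> {1..q} \<Longrightarrow> point_mass a \<in> distrs q"
  by (auto simp: distrs_def distr_point_mass point_mass_def)

lemma mixture_in_distrs:
  assumes "p \<in> distrs q" "d \<in> distrs q" "0 \<le> t" "t \<le> 1"
  shows "mixture t p d \<in> distrs q"
  using distr_mixture[of q p d t] assms by (auto simp: distrs_def mixture_def)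

lemma compact_distrs: "compact (distrs q)"
proof -
  define S where "S = (\<lambda>i::nat. if i \<in> {1..q} then {0..1::real} else {0})"
  have "compactin (product_topology (\<lambda>i. euclidean) UNIV) (PiE UNIV S)"
    by (subst compactin_PiE) (auto simp: S_def)
  then have "compact (PiE UNIV S)"
    by (simp add: euclidean_product_topology)
  moreover have "closed {p::nat \<Rightarrow> real. (\<Sum>i=1..q. p i) = 1}"
    by (intro closed_Collect_eq continuous_on_sum) auto
  moreover have "distrs q = PiE UNIV S \<inter> {p. (\<Sum>i=1..q. p i) = 1}"
  proof (intro equalityI subsetI)
    fix p assume "p \<in> distrs q"
    then show "p \<in> PiE UNIV S \<inter> {p. (\<Sum>i=1..q. p i) = 1}"
      using distr_le_1[of q p] by (auto simp: S_def distrs_def distr_def PiE_UNIV_domain)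
  next
    fix p assume "p \<in> PiE UNIV S \<inter> {p. (\<Sum>i=1..q. p i) = 1}"
    then have pS: "\<And>i. p i \<in> S i" and "(\<Sum>i=1..q. p i) = 1"
      by (auto simp: PiE_UNIV_domain)
    moreover have "0 \<le> p i" if "i \<in> {1..q}" for i
      using pS[of i] that by (simp add: S_def)
    moreover have "p i = 0" if "i \<notin> {1..q}" for i
      using pS[of i] that by (auto simp: S_def split: if_splits)
    ultimately show "p \<in> distrs q"
      by (simp add: distrs_def distr_def)
  qed
  ultimately show ?thesis
    by (simp add: compact_Int_closed)
qed

lemma continuous_on_entropy: "continuous_on (distrs q) (entropy q)"
proof -
  have "continuous_on (distrs q) (\<lambda>p. xlogx q (p i))" if "i \<in> {1..q}" for i
    using that
    by (intro continuous_on_compose2[OF continuous_on_xlogx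
          continuous_on_product_then_coordinatewise[OF continuous_on_id]])
      (auto simp: distrs_def distr_def)
  then show ?thesis
    unfolding entropy_def[abs_def] by (intro continuous_on_minus continuous_on_sum) auto
qed

lemma continuous_on_coll_prob: "continuous_on S (\<lambda>x. coll_prob q (fst x) (snd x))"
  unfolding coll_prob_def
  by (intro continuous_on_sum continuous_on_mult
      continuous_on_product_then_coordinatewise[OF continuous_on_fst[OF continuous_on_id]]
      continuous_on_product_then_coordinatewise[OF continuous_on_snd[OF continuous_on_id]])

section \<open>Distributions of the form (a, b, ..., b)\<close>

definition spike :: "nat \<Rightarrow> real \<Rightarrow> nat \<Rightarrow> real" where
  "spike q a i = (if i = 1 then a else (1 - a) / (real q - 1))"

text \<open>The entropy of \<open>spike q a\<close>, i.e. the \<open>q\<close>-ary entropy function evaluated at \<open>1 - a\<close>.\<close>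
definition qary_entropy :: "nat \<Rightarrow> real \<Rightarrow> real" where
  "qary_entropy q a = - a * log (real q) a - (1 - a) * log (real q) (1 - a)
    + (1 - a) * log (real q) (real q - 1)"

lemma qary_entropy_eq_ln:
  "qary_entropy q a = (- a * ln a - (1 - a) * ln (1 - a) + (1 - a) * ln (real q - 1)) / ln (real q)"
  by (simp add: qary_entropy_def log_def diff_divide_distrib add_divide_distrib)

lemma qary_entropy_one [simp]: "qary_entropy q 1 = 0"
  by (simp add: qary_entropy_def)

lemma continuous_on_qary_entropy: "continuous_on {0..1} (qary_entropy q)"
proof -
  have "continuous_on {0..1} (\<lambda>a::real. a * ln a)"
    by (rule continuous_on_subset[OF continuous_on_xlnx]) auto
  moreover have "continuous_on {0..1} (\<lambda>a::real. (1 - a) * ln (1 - a))"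
    by (rule continuous_on_compose2[OF continuous_on_xlnx, of _ "\<lambda>a. 1 - a"])
      (auto intro!: continuous_intros)
  moreover have "continuous_on {0..1} (\<lambda>a::real. (1 - a) * ln (real q - 1))"
    by (intro continuous_intros)
  ultimately have "continuous_on {0..1} (\<lambda>a::real.
      (- (a * ln a) - (1 - a) * ln (1 - a) + (1 - a) * ln (real q - 1)) * (1 / ln (real q)))"
    by (intro continuous_on_mult_right continuous_on_add continuous_on_diff continuous_on_minus
        continuous_on_const continuous_on_id)
  then show ?thesis by (simp add: qary_entropy_eq_ln[abs_def])
qed

lemma has_real_derivative_qary_entropy:
  assumes "0 < z" "z < 1"
  shows "(qary_entropy q has_real_derivative
    (ln (1 - z) - ln z - ln (real q - 1)) / ln (real q)) (at z)"
proof -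
  let ?f = "\<lambda>z. - (z * ln z) - (1 - z) * ln (1 - z) + (1 - z) * ln (real q - 1)"
  have "((\<lambda>z. z * ln z) has_real_derivative ln z + 1) (at z)"
    using assms by (auto intro!: derivative_eq_intros)
  moreover have "((\<lambda>z. (1 - z) * ln (1 - z)) has_real_derivative - (ln (1 - z) + 1)) (at z)"
    using assms by (auto intro!: derivative_eq_intros simp: field_simps)
  moreover have "((\<lambda>z. (1 - z) * ln (real q - 1)) has_real_derivative - ln (real q - 1)) (at z)"
    by (auto intro!: derivative_eq_intros)
  ultimately have "(?f has_real_derivative
      - (ln z + 1) - (- (ln (1 - z) + 1)) + (- ln (real q - 1))) (at z)"
    by (intro DERIV_add DERIV_diff DERIV_minus)
  then have "((\<lambda>z. ?f z / ln (real q)) has_real_derivative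
      (ln (1 - z) - ln z - ln (real q - 1)) / ln (real q)) (at z)"
    by (intro DERIV_cdivide) simp
  then show ?thesis
    by (simp add: qary_entropy_eq_ln[abs_def])
qed

lemma alpha_inverse [simp]: "alpha q (1 / real q) = 1 / real q"
  by (simp add: alpha_def)

context
  fixes q :: nat
  assumes q_ge_2: "2 \<le> q"
begin

lemma ln_q_pos: "0 < ln (real q)"
  using q_ge_2 by simp

lemma inverse_q_bounds: "0 < 1 / real q" "1 / real q < 1"
  using q_ge_2 by auto

lemma mem_unit_interval:
  "\<theta> \<in> {0..1 / real q} \<Longrightarrow> \<theta> \<in> {0..1}" "\<theta> \<in> {1 / real q..1} \<Longrightarrow> \<theta> \<in> {0..1}"
  using inverse_q_bounds unfolding atLeastAtMost_iff by (intro conjI; linarith)+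

lemma entropy_concave:
  assumes "distr q p" "distr q r" "0 \<le> t" "t \<le> 1"
  shows "(1 - t) * entropy q p + t * entropy q r \<le> entropy q (mixture t p r)"
proof -
  have "(\<Sum>i=1..q. mixture t p r i * ln (mixture t p r i))
      \<le> (\<Sum>i=1..q. (1 - t) * (p i * ln (p i)) + t * (r i * ln (r i)))"
    using assms unfolding mixture_def by (intro sum_mono xlnx_convex) (auto simp: distr_def)
  also have "\<dots> = (1 - t) * (\<Sum>i=1..q. p i * ln (p i)) + t * (\<Sum>i=1..q. r i * ln (r i))"
    by (simp add: sum.distrib sum_distrib_left)
  finally show ?thesis
    unfolding entropy_eq_ln using ln_q_pos by (simp add: divide_simps)
qed

lemma entropy_nonneg:
  assumes "distr q p"
  shows "0 \<le> entropy q p"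
proof -
  have "p i * ln (p i) \<le> 0" if "i \<in> {1..q}" for i
  proof -
    have "0 \<le> p i" "p i \<le> 1"
      using assms distr_le_1[OF assms that] that by (auto simp: distr_def)
    then show ?thesis by (cases "p i = 0") (auto intro!: mult_nonneg_nonpos)
  qed
  then have "(\<Sum>i=1..q. p i * ln (p i)) \<le> 0"
    by (intro sum_nonpos) auto
  then show ?thesis unfolding entropy_eq_ln using ln_q_pos by (simp add: divide_simps)
qed

lemma entropy_le_1:
  assumes "distr q p"
  shows "entropy q p \<le> 1"
proof -
  define m :: real where "m = 1 / real q"
  have "0 < m" using q_ge_2 by (simp add: m_def)
  then have "(\<Sum>i=1..q. m * ln m + (p i - m) * (ln m + 1)) \<le> (\<Sum>i=1..q. p i * ln (p i))"
    using assms by (intro sum_mono xlnx_ge_tangent) (auto simp: distr_def)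
  moreover have "(\<Sum>i=1..q. m * ln m + (p i - m) * (ln m + 1))
      = real q * m * ln m + ((\<Sum>i=1..q. p i) - real q * m) * (ln m + 1)"
    by (simp add: sum.distrib sum_subtractf flip: sum_distrib_right)
  moreover have "\<dots> = - ln (real q)"
    using assms q_ge_2 by (simp add: m_def distr_def ln_div)
  ultimately show ?thesis
    unfolding entropy_eq_ln using ln_q_pos by (simp add: divide_simps)
qed

lemma distr_uniform: "distr q (uniform q)"
  using q_ge_2 by (simp add: distr_def uniform_def)

lemma entropy_uniform: "entropy q (uniform q) = 1"
  using q_ge_2 ln_q_pos by (simp add: entropy_eq_ln uniform_def ln_div)

lemma entropy_mixture_ge:
  assumes "distr q p" "distr q d" "0 \<le> t" "t \<le> 1"
  shows "(1 - t) * entropy q p \<le> entropy q (mixture t p d)"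
proof -
  have "0 \<le> t * entropy q d"
    using entropy_nonneg[OF assms(2)] assms(3) by simp
  then show ?thesis
    using entropy_concave[OF assms] by linarith
qed

lemma entropy_mixture_uniform_ge:
  assumes "distr q p" "0 \<le> t" "t \<le> 1"
  shows "entropy q p \<le> entropy q (mixture t p (uniform q))"
proof -
  have "t * entropy q p \<le> t"
    using entropy_le_1[OF assms(1)] assms(2) by (simp add: mult_left_le)
  then show ?thesis
    using entropy_concave[OF assms(1) distr_uniform assms(2,3)]
    by (simp add: entropy_uniform algebra_simps)
qed

lemma sum_spike:
  "(\<Sum>i=1..q. f (spike q a i)) = f a + (real q - 1) * f ((1 - a) / (real q - 1))"
proof -
  have "(\<Sum>i=1..q. f (spike q a i)) = f a + (\<Sum>i=2..q. f (spike q a i))"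
    using q_ge_2 by (simp add: sum.atLeast_Suc_atMost spike_def numeral_2_eq_2)
  also have "(\<Sum>i=2..q. f (spike q a i)) = (\<Sum>i=2..q. f ((1 - a) / (real q - 1)))"
    by (intro sum.cong) (auto simp: spike_def)
  finally show ?thesis using q_ge_2 by (simp add: of_nat_diff)
qed

lemma distr_spike: "0 \<le> a \<Longrightarrow> a \<le> 1 \<Longrightarrow> distr q (spike q a)"
  using q_ge_2 sum_spike[of "\<lambda>x. x" a] by (auto simp: distr_def spike_def)

lemma coll_prob_spike:
  "coll_prob q (spike q a) (spike q a) = 1 / real q + (a - 1 / real q)\<^sup>2 * real q / (real q - 1)"
proof -
  have q: "real q - 1 \<noteq> 0" "real q \<noteq> 0" using q_ge_2 by auto
  have "coll_prob q (spike q a) (spike q a) = a * a + (1 - a) * (1 - a) / (real q - 1)"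
    using sum_spike[of "\<lambda>x. x * x" a] q by (simp add: coll_prob_def)
  also have "\<dots> = 1 / real q + (a - 1 / real q)\<^sup>2 * real q / (real q - 1)"
    using q by (simp add: field_simps power2_eq_square)
  finally show ?thesis .
qed

lemma entropy_spike_eq_ln:
  "entropy q (spike q a) = - (a * ln a
    + (real q - 1) * ((1 - a) / (real q - 1) * ln ((1 - a) / (real q - 1)))) / ln (real q)"
  using sum_spike[of "\<lambda>x. x * ln x" a] by (simp add: entropy_eq_ln)

lemma entropy_spike:
  assumes "0 \<le> a" "a \<le> 1"
  shows "entropy q (spike q a) = qary_entropy q a"
proof -
  have "(real q - 1) * ((1 - a) / (real q - 1) * ln ((1 - a) / (real q - 1)))
      = (1 - a) * (ln (1 - a) - ln (real q - 1))"
    using assms q_ge_2 by (cases "a = 1") (auto simp: ln_div)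
  then show ?thesis
    unfolding entropy_spike_eq_ln qary_entropy_eq_ln by (simp add: algebra_simps)
qed

lemma spike_inverse: "spike q (1 / real q) = uniform q"
  using q_ge_2 by (auto simp: fun_eq_iff spike_def uniform_def field_simps)

lemma qary_entropy_inverse: "qary_entropy q (1 / real q) = 1"
  using entropy_spike[of "1 / real q"] q_ge_2 by (simp add: spike_inverse entropy_uniform)

lemma qary_entropy_antimono: "antimono_on {1 / real q..1} (qary_entropy q)"
proof (rule monotone_onI)
  fix a b assume ab: "a \<in> {1 / real q..1}" "b \<in> {1 / real q..1}" "a \<le> b"
  have "a \<in> {0..1}" "b \<in> {0..1}"
    using ab mem_unit_interval by auto
  then have cont: "continuous_on {a..b} (qary_entropy q)"
    by (intro continuous_on_subset[OF continuous_on_qary_entropy]) auto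
  have "\<exists>D. (qary_entropy q has_real_derivative D) (at z) \<and> D \<le> 0" if "a < z" "z < b" for z
  proof (intro exI conjI)
    have z: "1 / real q < z" "z < 1" using ab that by auto
    with inverse_q_bounds(1) have "0 < z" by linarith
    then show "(qary_entropy q has_real_derivative
        (ln (1 - z) - ln z - ln (real q - 1)) / ln (real q)) (at z)"
      using z(2) by (rule has_real_derivative_qary_entropy)
    have "1 \<le> real q * z" using z q_ge_2 by (simp add: field_simps)
    then have "ln (1 - z) \<le> ln (z * (real q - 1))"
      using z by (subst ln_le_cancel_iff) (auto simp: algebra_simps)
    also have "\<dots> = ln z + ln (real q - 1)"
      using \<open>0 < z\<close> q_ge_2 by (simp add: ln_mult)
    finally show "(ln (1 - z) - ln z - ln (real q - 1)) / ln (real q) \<le> 0"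
      using ln_q_pos by (simp add: divide_nonpos_pos)
  qed
  then show "qary_entropy q b \<le> qary_entropy q a"
    by (rule DERIV_nonpos_imp_decreasing_open[OF \<open>a \<le> b\<close> _ cont])
qed

lemma alpha_strict_mono: "strict_mono_on {1 / real q..} (alpha q)"
proof (rule strict_mono_onI)
  fix x y assume "x \<in> {1 / real q..}" "y \<in> {1 / real q..}" "x < y"
  moreover have "0 < 1 - 1 / real q" using q_ge_2 by simp
  ultimately show "alpha q x < alpha q y"
    unfolding alpha_def by (intro add_strict_left_mono real_sqrt_less_mono mult_strict_left_mono) auto
qed

lemma alpha_one [simp]: "alpha q 1 = 1"
  using q_ge_2 by (simp add: alpha_def)

lemma alpha_mem: "\<theta> \<in> {1 / real q..1} \<Longrightarrow> alpha q \<theta> \<in> {1 / real q..1}"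
  using strict_mono_on_leD[OF alpha_strict_mono, of "1 / real q" \<theta>]
    strict_mono_on_leD[OF alpha_strict_mono, of \<theta> 1] q_ge_2
  by auto

lemma alpha_bij: "bij_betw (alpha q) {1 / real q..1} {1 / real q..1}"
proof -
  have k: "0 < 1 - 1 / real q" using q_ge_2 by simp
  then have k': "1 - 1 / real q \<noteq> 0" by linarith
  have "y \<in> alpha q ` {1 / real q..1}" if y: "y \<in> {1 / real q..1}" for y
  proof
    define \<theta> where "\<theta> = 1 / real q + (y - 1 / real q)\<^sup>2 / (1 - 1 / real q)"
    have "(1 - 1 / real q) * (\<theta> - 1 / real q) = (y - 1 / real q)\<^sup>2"
      unfolding \<theta>_def add_diff_cancel_left' times_divide_eq_right
      by (rule nonzero_mult_div_cancel_left[OF k'])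
    then have "alpha q \<theta> = 1 / real q + sqrt ((y - 1 / real q)\<^sup>2)"
      by (simp add: alpha_def)
    with y show "y = alpha q \<theta>"
      by simp
    have "(y - 1 / real q)\<^sup>2 \<le> (1 - 1 / real q) * (1 - 1 / real q)"
      using y by (simp add: power2_eq_square mult_mono)
    then have "(y - 1 / real q)\<^sup>2 / (1 - 1 / real q) \<le> 1 - 1 / real q"
      using k by (simp add: divide_le_eq)
    then show "\<theta> \<in> {1 / real q..1}"
      using k by (simp add: \<theta>_def)
  qed
  then show ?thesis
    using alpha_mem inj_on_subset[OF strict_mono_on_imp_inj_on[OF alpha_strict_mono]]
    by (auto simp: bij_betw_def)
qed

lemma coll_prob_spike_alpha:
  assumes "1 / real q \<le> \<theta>"
  shows "coll_prob q (spike q (alpha q \<theta>)) (spike q (alpha q \<theta>)) = \<theta>"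
proof -
  have "0 \<le> (1 - 1 / real q) * (\<theta> - 1 / real q)"
    using assms q_ge_2 by simp
  then have "(alpha q \<theta> - 1 / real q)\<^sup>2 = (1 - 1 / real q) * (\<theta> - 1 / real q)"
    by (simp add: alpha_def)
  then show ?thesis
    using q_ge_2 by (simp add: coll_prob_spike field_simps)
qed

section \<open>The upper bound\<close>

text \<open>Since \<open>\<Sum>i. (m i - b)\<^sup>2 = (a - b)\<^sup>2\<close>, every \<open>m i\<close> is at most \<open>a\<close>, so weighting
  \<open>bregman_xlnx_scaled_le\<close> by \<open>(m i - b)\<^sup>2\<close> and summing gives
  \<open>bregman_xlnx b a \<le> (\<Sum>i. bregman_xlnx b (m i))\<close>.\<close>
lemma spike_minimises_sum_xlnx:
  assumes "distr q m" "0 < b" "b < a" "a + (real q - 1) * b = 1"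
    and "(\<Sum>i=1..q. (m i)\<^sup>2) = a\<^sup>2 + (real q - 1) * b\<^sup>2"
  shows "a * ln a + (real q - 1) * (b * ln b) \<le> (\<Sum>i=1..q. m i * ln (m i))"
proof -
  have m_sum: "(\<Sum>i=1..q. m i) = 1" and m_nonneg: "\<And>i. i \<in> {1..q} \<Longrightarrow> 0 \<le> m i"
    using assms(1) by (auto simp: distr_def)
  have "(\<Sum>i=1..q. (m i - b)\<^sup>2) = (\<Sum>i=1..q. (m i)\<^sup>2) - 2 * b * (\<Sum>i=1..q. m i) + real q * b\<^sup>2"
    by (simp add: power2_diff sum.distrib sum_subtractf sum_distrib_left mult_ac)
  also have "\<dots> = (a - b)\<^sup>2 + 2 * b * (a + (real q - 1) * b - 1)"
    unfolding assms(5) m_sum by (simp add: power2_eq_square algebra_simps)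
  also have "\<dots> = (a - b)\<^sup>2"
    using assms(4) by simp
  finally have dev: "(\<Sum>i=1..q. (m i - b)\<^sup>2) = (a - b)\<^sup>2" .
  have m_le: "m i \<le> a" if "i \<in> {1..q}" for i
  proof -
    have "(m i - b)\<^sup>2 \<le> (a - b)\<^sup>2"
      using that member_le_sum[of i "{1..q}" "\<lambda>i. (m i - b)\<^sup>2"] dev by simp
    with assms(3) show ?thesis
      using power2_le_imp_le[of "m i - b" "a - b"] by simp
  qed
  have "(a - b)\<^sup>2 * bregman_xlnx b a = (\<Sum>i=1..q. (m i - b)\<^sup>2 * bregman_xlnx b a)"
    unfolding dev[symmetric] by (simp add: sum_distrib_right)
  also have "\<dots> \<le> (\<Sum>i=1..q. (a - b)\<^sup>2 * bregman_xlnx b (m i))"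
    using assms(2,3) m_nonneg m_le by (intro sum_mono bregman_xlnx_scaled_le) auto
  finally have "bregman_xlnx b a \<le> (\<Sum>i=1..q. bregman_xlnx b (m i))"
    using assms(2,3) by (simp add: mult_le_cancel_left_pos flip: sum_distrib_left)
  also have "\<dots> = (\<Sum>i=1..q. m i * ln (m i)) - ln b - 1 + real q * b"
    using m_sum by (simp add: bregman_xlnx_def sum.distrib sum_subtractf flip: sum_distrib_right)
  finally have bregman: "bregman_xlnx b a \<le> (\<Sum>i=1..q. m i * ln (m i)) - ln b - 1 + real q * b" .
  have "(real q - 1) * b = 1 - a"
    using assms(4) by simp
  then have "(real q - 1) * (b * ln b) = ln b - a * ln b"
    by (simp add: left_diff_distrib flip: mult.assoc)
  moreover have "real q * b = 1 - a + b"
    using assms(4) by (simp add: algebra_simps)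
  ultimately show ?thesis
    using bregman unfolding bregman_xlnx_def by linarith
qed

lemma entropy_le_qary_entropy_alpha:
  assumes "distr q m" "1 / real q \<le> (\<Sum>i=1..q. (m i)\<^sup>2)"
  shows "entropy q m \<le> qary_entropy q (alpha q (\<Sum>i=1..q. (m i)\<^sup>2))"
proof -
  define c where "c = (\<Sum>i=1..q. (m i)\<^sup>2)"
  have m_unit: "0 \<le> m i" "m i \<le> 1" if "i \<in> {1..q}" for i
    using assms(1) distr_le_1[OF assms(1) that] that by (auto simp: distr_def)
  have "c \<le> 1" using distr_sum_squares_le_1[OF assms(1)] by (simp add: c_def)
  then consider "c = 1 / real q" | "c = 1" | "1 / real q < c" "c < 1"
    using assms(2) unfolding c_def by linarith
  then show ?thesis
  proof cases
    case 1
    then show ?thesis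
      using entropy_le_1[OF assms(1)] unfolding c_def[symmetric] by (simp add: qary_entropy_inverse)
  next
    case 2
    have "(\<Sum>i=1..q. m i * (1 - m i)) = (\<Sum>i=1..q. m i) - c"
      by (simp add: c_def right_diff_distrib sum_subtractf power2_eq_square)
    then have "(\<Sum>i=1..q. m i * (1 - m i)) = 0"
      using assms(1) 2 by (simp add: distr_def)
    then have "\<forall>i\<in>{1..q}. m i * (1 - m i) = 0"
      using m_unit by (subst (asm) sum_nonneg_eq_0_iff) auto
    then have "\<forall>i\<in>{1..q}. m i * ln (m i) = 0"
      by auto
    then have "(\<Sum>i=1..q. m i * ln (m i)) = 0"
      by (rule sum.neutral)
    then have "entropy q m = 0"
      by (simp add: entropy_eq_ln)
    with 2 show ?thesis unfolding c_def[symmetric] by simp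
  next
    case 3
    define a where "a = alpha q c"
    define b where "b = (1 - a) / (real q - 1)"
    have a: "1 / real q < a" "a < 1"
      using strict_mono_onD[OF alpha_strict_mono, of "1 / real q" c]
        strict_mono_onD[OF alpha_strict_mono, of c 1] 3
      by (auto simp: a_def)
    have q: "1 < real q" using q_ge_2 by simp
    have "0 < b" using a q by (simp add: b_def)
    moreover have "b < a"
      using a q by (simp add: b_def field_simps)
    moreover have "a + (real q - 1) * b = 1"
      using q by (simp add: b_def)
    moreover have "(\<Sum>i=1..q. (m i)\<^sup>2) = a\<^sup>2 + (real q - 1) * b\<^sup>2"
      using coll_prob_spike_alpha[of c] sum_spike[of "\<lambda>x. x\<^sup>2" a] 3
      by (simp add: coll_prob_def a_def b_def c_def power2_eq_square)
    ultimately have "a * ln a + (real q - 1) * (b * ln b) \<le> (\<Sum>i=1..q. m i * ln (m i))"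
      by (rule spike_minimises_sum_xlnx[OF assms(1)])
    then have "entropy q m \<le> entropy q (spike q a)"
      unfolding entropy_eq_ln[of q m] entropy_spike_eq_ln[of a, folded b_def] using ln_q_pos
      by (intro divide_right_mono) auto
    moreover have "entropy q (spike q a) = qary_entropy q a"
      using a inverse_q_bounds by (intro entropy_spike) linarith+
    ultimately show ?thesis
      by (simp add: a_def c_def)
  qed
qed

lemma entropy_add_le_qary_entropy_alpha:
  assumes "distr q p" "distr q r" "1 / real q \<le> coll_prob q p r"
  shows "entropy q p + entropy q r \<le> 2 * qary_entropy q (alpha q (coll_prob q p r))"
proof -
  define m where "m = mixture (1 / 2) p r"
  define c where "c = (\<Sum>i=1..q. (m i)\<^sup>2)"
  have m: "distr q m"
    unfolding m_def by (rule distr_mixture[OF assms(1,2)]) auto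
  have "entropy q p + entropy q r \<le> 2 * entropy q m"
    using entropy_concave[OF assms(1,2), of "1 / 2"] by (simp add: m_def)
  moreover have "coll_prob q p r \<le> c"
    unfolding coll_prob_def c_def
  proof (rule sum_mono)
    fix i
    have "(m i)\<^sup>2 - p i * r i = ((p i - r i) / 2)\<^sup>2"
      by (simp add: m_def mixture_def power2_eq_square algebra_simps)
    then show "p i * r i \<le> (m i)\<^sup>2"
      by (metis diff_ge_0_iff_ge zero_le_power2)
  qed
  moreover have "c \<le> 1"
    using distr_sum_squares_le_1[OF m] by (simp add: c_def)
  ultimately have "alpha q (coll_prob q p r) \<in> {1 / real q..1}" "alpha q c \<in> {1 / real q..1}"
    and "alpha q (coll_prob q p r) \<le> alpha q c"
    using assms(3) alpha_mem strict_mono_on_leD[OF alpha_strict_mono] by auto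
  then have "qary_entropy q (alpha q c) \<le> qary_entropy q (alpha q (coll_prob q p r))"
    using monotone_onD[OF qary_entropy_antimono] by auto
  moreover have "entropy q m \<le> qary_entropy q (alpha q c)"
    using entropy_le_qary_entropy_alpha[OF m] assms(3) \<open>coll_prob q p r \<le> c\<close>
    by (simp add: c_def)
  ultimately show ?thesis
    using \<open>entropy q p + entropy q r \<le> 2 * entropy q m\<close> by linarith
qed

section \<open>The maximal entropy F\<close>

lemma ent_set_bdd_above: "bdd_above (ent_set q \<theta>)"
proof (rule bdd_aboveI)
  fix h assume "h \<in> ent_set q \<theta>"
  then obtain p r where "distr q p" "distr q r" "h = joint_entropy q p r"
    by (auto simp: ent_set_def)
  then show "h \<le> 2"
    using entropy_le_1[of p] entropy_le_1[of r] by (simp add: joint_entropy_eq_entropy_add)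
qed

lemma entropy_add_le_F:
  assumes "distr q p" "distr q r" "coll_prob q p r = \<theta>"
  shows "entropy q p + entropy q r \<le> F q \<theta>"
  unfolding F_def
  using entropy_add_in_ent_set[OF assms] ent_set_bdd_above by (rule cSup_upper)

lemma exists_max_entropy_pair:
  assumes "\<theta> \<in> {0..1}"
  shows "\<exists>p\<in>distrs q. \<exists>r\<in>distrs q. coll_prob q p r = \<theta> \<and>
    (\<forall>p'\<in>distrs q. \<forall>r'\<in>distrs q. coll_prob q p' r' = \<theta> \<longrightarrow>
      entropy q p' + entropy q r' \<le> entropy q p + entropy q r)"
proof -
  define K where "K = (distrs q \<times> distrs q) \<inter> {x. coll_prob q (fst x) (snd x) = \<theta>}"
  have "compact K"
    unfolding K_def using continuous_on_coll_prob[of UNIV q]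
    by (intro compact_Int_closed compact_Times compact_distrs closed_Collect_eq) auto
  have in12: "1 \<in> {1..q}" "2 \<in> {1..q}" using q_ge_2 by auto
  have "coll_prob q (point_mass 1) (mixture (1 - \<theta>) (point_mass 1) (point_mass 2)) = \<theta>"
    using in12
    by (simp add: coll_prob_commute[of q "point_mass 1" "mixture (1 - \<theta>) (point_mass 1) (point_mass 2)"]
        coll_prob_mixture_left
        coll_prob_point_mass_left point_mass_def mixture_def)
  then have "(point_mass 1, mixture (1 - \<theta>) (point_mass 1) (point_mass 2)) \<in> K"
    using assms in12 by (simp add: K_def point_mass_in_distrs mixture_in_distrs)
  then have "K \<noteq> {}" by blast
  moreover have "continuous_on K (\<lambda>x. entropy q (fst x) + entropy q (snd x))"
    unfolding K_def
    by (intro continuous_on_add continuous_on_compose2[OF continuous_on_entropy]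
        continuous_on_fst continuous_on_snd continuous_on_id) auto
  ultimately obtain p r where "(p, r) \<in> K"
    and max: "\<forall>y\<in>K. entropy q (fst y) + entropy q (snd y) \<le> entropy q p + entropy q r"
    using continuous_attains_sup[OF \<open>compact K\<close>] by fastforce
  have "entropy q p' + entropy q r' \<le> entropy q p + entropy q r"
    if "p' \<in> distrs q" "r' \<in> distrs q" "coll_prob q p' r' = \<theta>" for p' r'
    using max[rule_format, of "(p', r')"] that by (auto simp: K_def)
  with \<open>(p, r) \<in> K\<close> show ?thesis
    by (auto simp: K_def)
qed

lemma F_attained:
  assumes "\<theta> \<in> {0..1}"
  obtains p r where "p \<in> distrs q" "r \<in> distrs q" "coll_prob q p r = \<theta>"
    "F q \<theta> = entropy q p + entropy q r"
proof -
  obtain p r where pr: "p \<in> distrs q" "r \<in> distrs q" "coll_prob q p r = \<theta>"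
    and max: "\<And>p' r'. p' \<in> distrs q \<Longrightarrow> r' \<in> distrs q \<Longrightarrow> coll_prob q p' r' = \<theta> \<Longrightarrow>
      entropy q p' + entropy q r' \<le> entropy q p + entropy q r"
    using exists_max_entropy_pair[OF assms] by blast
  have "h \<le> entropy q p + entropy q r" if "h \<in> ent_set q \<theta>" for h
  proof -
    obtain p1 r1 where p1r1: "distr q p1" "distr q r1" "coll_prob q p1 r1 = \<theta>"
      "h = joint_entropy q p1 r1"
      using \<open>h \<in> ent_set q \<theta>\<close> by (auto simp: ent_set_def)
    obtain p' r' where "p' \<in> distrs q" "r' \<in> distrs q"
      "\<forall>i\<in>{1..q}. p' i = p1 i" "\<forall>i\<in>{1..q}. r' i = r1 i"
      using exists_distrs_agree p1r1(1,2) by metis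
    moreover from this have "entropy q p' = entropy q p1" "entropy q r' = entropy q r1"
      "coll_prob q p' r' = coll_prob q p1 r1"
      by (auto intro: entropy_cong coll_prob_cong)
    ultimately show ?thesis
      using max[of p' r'] p1r1 by (simp add: joint_entropy_eq_entropy_add)
  qed
  moreover have "entropy q p + entropy q r \<in> ent_set q \<theta>"
    using pr by (intro entropy_add_in_ent_set) (auto simp: distr_if_distrs)
  ultimately have "F q \<theta> = entropy q p + entropy q r"
    unfolding F_def by (intro cSup_eq_maximum) auto
  with pr show thesis by (rule that)
qed

lemma F_eq_qary_entropy_alpha:
  assumes "\<theta> \<in> {1 / real q..1}"
  shows "F q \<theta> = 2 * qary_entropy q (alpha q \<theta>)"
proof (rule antisym)
  obtain p r where "p \<in> distrs q" "r \<in> distrs q" "coll_prob q p r = \<theta>"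
    "F q \<theta> = entropy q p + entropy q r"
    using F_attained[OF mem_unit_interval(2)[OF assms]] .
  with assms show "F q \<theta> \<le> 2 * qary_entropy q (alpha q \<theta>)"
    using entropy_add_le_qary_entropy_alpha by (auto simp: distr_if_distrs)
next
  let ?s = "spike q (alpha q \<theta>)"
  have "alpha q \<theta> \<in> {0..1}"
    using mem_unit_interval(2)[OF alpha_mem[OF assms]] .
  then have "distr q ?s" "entropy q ?s = qary_entropy q (alpha q \<theta>)"
    using distr_spike entropy_spike by auto
  moreover have "coll_prob q ?s ?s = \<theta>"
    using assms coll_prob_spike_alpha by simp
  ultimately show "2 * qary_entropy q (alpha q \<theta>) \<le> F q \<theta>"
    using entropy_add_le_F[of ?s ?s \<theta>] by simp
qed

lemma F_antimono: "antimono_on {1 / real q..1} (F q)"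
proof (rule monotone_onI)
  fix x y assume "x \<in> {1 / real q..1}" "y \<in> {1 / real q..1}" "x \<le> y"
  then show "F q y \<le> F q x"
    using monotone_onD[OF qary_entropy_antimono] alpha_mem strict_mono_on_leD[OF alpha_strict_mono]
    by (simp add: F_eq_qary_entropy_alpha)
qed

lemma coll_prob_mixture_uniform:
  assumes "distr q p" "distr q r" "0 \<le> t" "t \<le> 1"
  shows "coll_prob q (mixture t p (uniform q)) (mixture t r (uniform q))
    = 1 / real q - (1 - t)\<^sup>2 * (1 / real q - coll_prob q p r)"
proof -
  let ?r' = "mixture t r (uniform q)"
  have p_r': "coll_prob q p ?r' = (1 - t) * coll_prob q p r + t * (1 / real q)"
    using assms(1)
    by (simp add: coll_prob_commute[of q p ?r'] coll_prob_commute[of q r p] coll_prob_mixture_left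
        coll_prob_uniform_left)
  have u_r': "coll_prob q (uniform q) ?r' = 1 / real q"
    using distr_mixture[OF assms(2) distr_uniform assms(3,4)] by (rule coll_prob_uniform_left)
  have "coll_prob q (mixture t p (uniform q)) ?r'
      = (1 - t) * ((1 - t) * coll_prob q p r + t * (1 / real q)) + t * (1 / real q)"
    by (simp only: coll_prob_mixture_left p_r' u_r')
  also have "\<dots> = 1 / real q - (1 - t)\<^sup>2 * (1 / real q - coll_prob q p r)"
    by (simp only: power2_eq_square algebra_simps)
  finally show ?thesis .
qed

lemma F_mono: "mono_on {0..1 / real q} (F q)"
proof (rule monotone_onI)
  fix \<theta>1 \<theta>2 assume \<theta>: "\<theta>1 \<in> {0..1 / real q}" "\<theta>2 \<in> {0..1 / real q}" "\<theta>1 \<le> \<theta>2"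
  show "F q \<theta>1 \<le> F q \<theta>2"
  proof (cases "\<theta>1 = \<theta>2")
    case False
    with \<theta> have lt: "\<theta>1 < 1 / real q" by simp
    obtain p r where "p \<in> distrs q" "r \<in> distrs q" and pr: "coll_prob q p r = \<theta>1"
      "F q \<theta>1 = entropy q p + entropy q r"
      using F_attained[OF mem_unit_interval(1)[OF \<theta>(1)]] .
    then have pd: "distr q p" "distr q r" by (simp_all add: distr_if_distrs)
    define s where "s = sqrt ((1 / real q - \<theta>2) / (1 / real q - \<theta>1))"
    have s: "0 \<le> s" "s \<le> 1" "s\<^sup>2 * (1 / real q - \<theta>1) = 1 / real q - \<theta>2"
      using \<theta> lt by (auto simp: s_def)
    define t where "t = 1 - s"
    have t: "0 \<le> t" "t \<le> 1" using s by (auto simp: t_def)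
    have "coll_prob q (mixture t p (uniform q)) (mixture t r (uniform q))
        = 1 / real q - (1 - t)\<^sup>2 * (1 / real q - \<theta>1)"
      by (simp add: coll_prob_mixture_uniform[OF pd t] pr(1))
    also have "\<dots> = \<theta>2"
      using s(3) by (simp add: t_def)
    finally have "coll_prob q (mixture t p (uniform q)) (mixture t r (uniform q)) = \<theta>2" .
    then have "entropy q (mixture t p (uniform q)) + entropy q (mixture t r (uniform q)) \<le> F q \<theta>2"
      using distr_mixture[OF _ distr_uniform t] pd entropy_add_le_F by blast
    moreover have "entropy q p \<le> entropy q (mixture t p (uniform q))"
      "entropy q r \<le> entropy q (mixture t r (uniform q))"
      using entropy_mixture_uniform_ge pd t by auto
    ultimately show ?thesis using pr(2) by linarith
  qed simp
qed

lemma coll_prob_mixture_point_masses: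
  assumes "p 2 = coll_prob q p r" "r 1 = coll_prob q p r"
  shows "coll_prob q (mixture t p (point_mass 1)) (mixture t r (point_mass 2))
    = coll_prob q p r * (1 - t\<^sup>2)"
proof -
  let ?\<theta> = "coll_prob q p r" and ?r' = "mixture t r (point_mass 2)"
  have in12: "1 \<in> {1..q}" "2 \<in> {1..q}" using q_ge_2 by auto
  have "coll_prob q p ?r' = (1 - t) * ?\<theta> + t * ?\<theta>"
    using in12 assms(1)
    by (simp add: coll_prob_commute[of q p ?r'] coll_prob_mixture_left
        coll_prob_point_mass_left coll_prob_commute[of q r p])
  moreover have "coll_prob q (point_mass 1) ?r' = (1 - t) * ?\<theta>"
    using in12 assms(2) by (simp add: coll_prob_point_mass_left mixture_def point_mass_def)
  ultimately have "coll_prob q (mixture t p (point_mass 1)) ?r'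
      = (1 - t) * ((1 - t) * ?\<theta> + t * ?\<theta>) + t * ((1 - t) * ?\<theta>)"
    by (simp only: coll_prob_mixture_left)
  also have "\<dots> = ?\<theta> * (1 - t\<^sup>2)"
    by (simp add: power2_eq_square algebra_simps)
  finally show ?thesis .
qed

text \<open>Moving \<open>p\<close> towards a point mass where \<open>r\<close> is small (or \<open>r\<close> where \<open>p\<close> is small)
  lowers the collision probability; if there is no such point, both are uniform and
  moving them towards two different point masses does.\<close>
lemma exists_pair_lower_coll:
  assumes "distr q p" "distr q r" "0 < coll_prob q p r" "0 < t" "t \<le> 1"
  obtains p' r' where "distr q p'" "distr q r'" "coll_prob q p' r' < coll_prob q p r"
    "(1 - t) * (entropy q p + entropy q r) \<le> entropy q p' + entropy q r'"
proof -
  let ?\<theta> = "coll_prob q p r"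
  have t: "0 \<le> t" "t \<le> 1" using assms(4,5) by auto
  have mix: "distr q (mixture t u (point_mass a))"
    "(1 - t) * entropy q u \<le> entropy q (mixture t u (point_mass a))"
    if "distr q u" "a \<in> {1..q}" for u a
    using distr_mixture[OF that(1) distr_point_mass[OF that(2)] t]
      entropy_mixture_ge[OF that(1) distr_point_mass[OF that(2)] t] by auto
  have keep: "(1 - t) * entropy q u \<le> entropy q u" if "distr q u" for u
    using entropy_nonneg[OF that] t by (simp add: mult_left_le_one_le)
  consider (r_small) a where "a \<in> {1..q}" "r a < ?\<theta>"
    | (p_small) a where "a \<in> {1..q}" "p a < ?\<theta>"
    | (flat) "\<And>i. i \<in> {1..q} \<Longrightarrow> ?\<theta> \<le> p i \<and> ?\<theta> \<le> r i"
    by (meson not_le)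
  then show thesis
  proof cases
    case r_small
    have "coll_prob q (mixture t p (point_mass a)) r < ?\<theta>"
      using r_small assms(4) by (simp add: coll_prob_mixture_left coll_prob_point_mass_left algebra_simps)
    then show thesis
      using that[OF mix(1)[OF assms(1) r_small(1)] assms(2)]
        mix(2)[OF assms(1) r_small(1)] keep[OF assms(2)] by (simp add: distrib_left)
  next
    case p_small
    have "coll_prob q (mixture t r (point_mass a)) p < coll_prob q r p"
      using p_small assms(4)
      by (simp add: coll_prob_commute[of q r p] coll_prob_mixture_left coll_prob_point_mass_left
          algebra_simps)
    then show thesis
      using that[OF assms(1) mix(1)[OF assms(2) p_small(1)]]
        mix(2)[OF assms(2) p_small(1)] keep[OF assms(1)]
      by (simp add: distrib_left coll_prob_commute[of q p])
  next
    case flat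
    have in12: "1 \<in> {1..q}" "2 \<in> {1..q}" using q_ge_2 by auto
    have "p 2 = ?\<theta>"
      using coll_prob_le_masses_imp_const[OF assms(2,1)] assms(3) flat in12
      by (simp add: coll_prob_commute[of q r])
    moreover have "r 1 = ?\<theta>"
      using coll_prob_le_masses_imp_const[OF assms(1-3) flat] in12 by blast
    ultimately have "coll_prob q (mixture t p (point_mass 1)) (mixture t r (point_mass 2))
        = ?\<theta> * (1 - t\<^sup>2)"
      by (rule coll_prob_mixture_point_masses)
    also have "\<dots> < ?\<theta>"
      using assms(3,4) by (simp add: mult_less_cancel_left1)
    finally show thesis
      using that[OF mix(1)[OF assms(1) in12(1)] mix(1)[OF assms(2) in12(2)]]
        mix(2)[OF assms(1) in12(1)] mix(2)[OF assms(2) in12(2)] by (simp add: distrib_left)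
  qed
qed

lemma F_left_approx:
  assumes "\<theta> \<in> {0<..1}" "0 < \<epsilon>"
  shows "\<exists>\<theta>'\<in>{0..<\<theta>}. F q \<theta> - \<epsilon> < F q \<theta>'"
proof -
  have "\<theta> \<in> {0..1}" using assms(1) by simp
  then obtain p r where "p \<in> distrs q" "r \<in> distrs q" and pr: "coll_prob q p r = \<theta>"
    "F q \<theta> = entropy q p + entropy q r"
    by (rule F_attained)
  then have pd: "distr q p" "distr q r" by (simp_all add: distr_if_distrs)
  define t where "t = min 1 (\<epsilon> / 4)"
  have t: "0 < t" "t \<le> 1" "t < \<epsilon> / 2" using assms(2) by (auto simp: t_def)
  obtain p' r' where p'r': "distr q p'" "distr q r'" "coll_prob q p' r' < \<theta>"
    "(1 - t) * (entropy q p + entropy q r) \<le> entropy q p' + entropy q r'"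
    using exists_pair_lower_coll[OF pd _ t(1,2)] pr(1) assms(1) by auto
  have "F q \<theta> \<le> 2"
    using pr(2) entropy_le_1[OF pd(1)] entropy_le_1[OF pd(2)] by simp
  then have "t * F q \<theta> \<le> t * 2"
    using t by (intro mult_left_mono) auto
  moreover have "(1 - t) * F q \<theta> = F q \<theta> - t * F q \<theta>"
    by (simp add: left_diff_distrib)
  ultimately have "F q \<theta> - \<epsilon> < (1 - t) * F q \<theta>"
    using t by linarith
  also have "\<dots> \<le> F q (coll_prob q p' r')"
    using p'r'(4) pr(2) entropy_add_le_F[OF p'r'(1,2) refl] by simp
  finally show ?thesis
    using p'r'(3) coll_prob_nonneg[OF p'r'(1,2)] by auto
qed

lemma F_usc:
  assumes "\<theta> \<in> {0..1}" "0 < \<epsilon>"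
  shows "\<exists>\<delta>>0. \<forall>\<theta>'\<in>{0..1}. \<bar>\<theta>' - \<theta>\<bar> < \<delta> \<longrightarrow> F q \<theta>' < F q \<theta> + \<epsilon>"
proof -
  have "\<exists>\<delta>>0. \<forall>x\<in>distrs q \<times> distrs q. \<bar>coll_prob q (fst x) (snd x) - \<theta>\<bar> < \<delta> \<longrightarrow>
      entropy q (fst x) + entropy q (snd x) < F q \<theta> + \<epsilon>"
  proof (rule compact_fibres_upper_bound)
    show "compact (distrs q \<times> distrs q)"
      by (intro compact_Times compact_distrs)
    show "continuous_on (distrs q \<times> distrs q) (\<lambda>x. entropy q (fst x) + entropy q (snd x))"
      by (intro continuous_on_add continuous_on_compose2[OF continuous_on_entropy]
          continuous_on_fst continuous_on_snd continuous_on_id) auto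
    show "continuous_on (distrs q \<times> distrs q) (\<lambda>x. coll_prob q (fst x) (snd x))"
      by (rule continuous_on_coll_prob)
    fix x assume "x \<in> distrs q \<times> distrs q" "coll_prob q (fst x) (snd x) = \<theta>"
    then have "entropy q (fst x) + entropy q (snd x) \<le> F q \<theta>"
      by (intro entropy_add_le_F) (auto simp: distr_if_distrs)
    with assms(2) show "entropy q (fst x) + entropy q (snd x) < F q \<theta> + \<epsilon>"
      by linarith
  qed
  then obtain \<delta> where "\<delta> > 0" and \<delta>: "\<And>x. x \<in> distrs q \<times> distrs q \<Longrightarrow>
      \<bar>coll_prob q (fst x) (snd x) - \<theta>\<bar> < \<delta> \<Longrightarrow> entropy q (fst x) + entropy q (snd x) < F q \<theta> + \<epsilon>"
    by blast
  have "F q \<theta>' < F q \<theta> + \<epsilon>" if \<theta>': "\<theta>' \<in> {0..1}" "\<bar>\<theta>' - \<theta>\<bar> < \<delta>" for \<theta>'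
  proof -
    obtain p r where "p \<in> distrs q" "r \<in> distrs q" "coll_prob q p r = \<theta>'"
      "F q \<theta>' = entropy q p + entropy q r"
      using F_attained[OF \<theta>'(1)] .
    then show ?thesis using \<delta>[of "(p, r)"] \<theta>'(2) by simp
  qed
  with \<open>\<delta> > 0\<close> show ?thesis by blast
qed

lemma continuous_on_F: "continuous_on {0..1} (F q)"
proof -
  have "\<exists>\<delta>>0. \<forall>y\<in>{0..1 / real q}. \<bar>y - x\<bar> < \<delta> \<longrightarrow> F q y < F q x + \<epsilon>"
    if "x \<in> {0..1 / real q}" "0 < \<epsilon>" for x \<epsilon>
    using F_usc[OF mem_unit_interval(1)[OF that(1)] that(2)] mem_unit_interval(1) by blast
  moreover have "\<exists>y\<in>{0..<x}. F q x - \<epsilon> < F q y" if "x \<in> {0<..1 / real q}" "0 < \<epsilon>" for x \<epsilon>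
  proof (rule F_left_approx[OF _ that(2)])
    show "x \<in> {0<..1}"
      using that(1) inverse_q_bounds unfolding greaterThanAtMost_iff by (intro conjI; linarith)
  qed
  ultimately have "continuous_on {0..1 / real q} (F q)"
    by (intro continuous_on_mono_usc_left_approx F_mono)
  moreover have "alpha q ` {1 / real q..1} \<subseteq> {0..1}"
    using alpha_mem mem_unit_interval(2) by blast
  then have "continuous_on {1 / real q..1} (\<lambda>\<theta>. 2 * qary_entropy q (alpha q \<theta>))"
    by (intro continuous_on_mult continuous_on_const continuous_on_compose2[OF
          continuous_on_qary_entropy]) (auto simp: alpha_def intro!: continuous_intros)
  then have "continuous_on {1 / real q..1} (F q)"
    by (rule continuous_on_cong[THEN iffD1, rotated 2]) (auto simp: F_eq_qary_entropy_alpha)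
  moreover have "{0..1} = {0..1 / real q} \<union> {1 / real q..1}"
    using inverse_q_bounds by (intro ivl_disj_un_two_touch(4)[symmetric]) auto
  ultimately show ?thesis
    by (metis continuous_on_closed_Un closed_atLeastAtMost)
qed

end

theorem lemma2:
  fixes q :: nat
  assumes "q \<ge> 2"
  shows "(\<forall>\<theta>\<in>{0..1}. F q \<theta> \<in> ent_set q \<theta> \<and> (\<forall>h\<in>ent_set q \<theta>. h \<le> F q \<theta>))
       \<and> continuous_on {0..1} (F q)
       \<and> mono_on {0..1 / real q} (F q)
       \<and> antimono_on {1 / real q..1} (F q)
       \<and> (\<forall>\<theta>\<in>{1 / real q..1}.
            F q \<theta> = 2 * (- alpha q \<theta> * log (real q) (alpha q \<theta>)
                          - (1 - alpha q \<theta>) * log (real q) (1 - alpha q \<theta>)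
                          + (1 - alpha q \<theta>) * log (real q) (real q - 1)))
       \<and> bij_betw (alpha q) {1 / real q..1} {1 / real q..1}"
proof -
  have "F q \<theta> \<in> ent_set q \<theta>" if \<theta>: "\<theta> \<in> {0..1}" for \<theta>
  proof -
    obtain p r where "p \<in> distrs q" "r \<in> distrs q" "coll_prob q p r = \<theta>"
      "F q \<theta> = entropy q p + entropy q r"
      using F_attained[OF assms \<theta>] .
    with entropy_add_in_ent_set[of q p r \<theta>] show ?thesis
      by (simp add: distr_if_distrs)
  qed
  moreover have "h \<le> F q \<theta>" if "h \<in> ent_set q \<theta>" for h \<theta>
    using that ent_set_bdd_above[OF assms] by (simp add: F_def cSup_upper)
  ultimately show ?thesis
    using continuous_on_F F_mono F_antimono F_eq_qary_entropy_alpha alpha_bij assms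
    by (simp add: qary_entropy_def)
qed

end
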